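(* For every $D \in \Omega_n$, $n - 1 \le r_{\mathcal{S}_2}(D)^2 \le 2n$.
   Context: $\Omega_n$ denotes the set of $n\times n$ doubly stochastic matrices (nonnegative real entries, all row and column sums equal to $1$). $\|\cdot\|_{\mathcal{S}_2}$ is the Frobenius norm. For $A\in M_n(\mathbb{R})$, $r_{\mathcal{S}_2}(A) := \max_{B\in\Omega_n}\|A-B\|_{\mathcal{S}_2}$. *)

theory Defs
  imports "HOL-Analysis.Analysis"
begin

definition doubly_stochastic :: "(real^'n^'n) set" where
  "doubly_stochastic = {B. (\<forall>i j. 0 \<le> B $ i $ j) \<and>
      (\<forall>i. (\<Sum>j\<in>UNIV. B $ i $ j) = 1) \<and>
      (\<forall>j. (\<Sum>i\<in>UNIV. B $ i $ j) = 1)}"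

definition frob_norm :: "real^'n^'m \<Rightarrow> real" where
  "frob_norm A = sqrt (\<Sum>i\<in>UNIV. \<Sum>j\<in>UNIV. (A $ i $ j)^2)"

text \<open>r_{S_2}(A) = max over B in Omega_n of ||A - B||_{S_2} (the max exists by compactness).\<close>
definition r_S2 :: "real^'n^'n \<Rightarrow> real" where
  "r_S2 A = (SUP B\<in>doubly_stochastic. frob_norm (A - B))"

end

theory Submission
  imports Defs "HOL-Number_Theory.Cong"
begin

text \<open>
  Upper bound: the entries of doubly stochastic matrices lie in [0,1], so (d - b)^2 <= d + b
  entrywise, and the entries of D and of B each sum to n.
  Lower bound: for a bijection g of the index type onto {0..n-1}, the n matrices
  P_k = [(g i + g j) mod n = k] are permutation matrices summing to the all-ones matrix.
  Averaging over them gives  sum_k ||D - P_k||^2 = n ||D||^2 - 2n + n^2,  and ||D||^2 >= 1 by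
  Cauchy-Schwarz, so some P_k satisfies ||D - P_k||^2 >= n - 1.
\<close>

lemma frob_norm_nonneg: "0 \<le> frob_norm A"
  unfolding frob_norm_def by (simp add: sum_nonneg)

lemma frob_norm_power2: "(frob_norm A)\<^sup>2 = (\<Sum>i\<in>UNIV. \<Sum>j\<in>UNIV. (A $ i $ j)\<^sup>2)"
  unfolding frob_norm_def by (simp add: sum_nonneg)

lemma doubly_stochastic_nonneg: "B \<in> doubly_stochastic \<Longrightarrow> 0 \<le> B $ i $ j"
  by (simp add: doubly_stochastic_def)

lemma doubly_stochastic_le_one:
  assumes "B \<in> doubly_stochastic"
  shows "B $ i $ j \<le> 1"
proof -
  have "B $ i $ j \<le> (\<Sum>j\<in>UNIV. B $ i $ j)"
    using assms by (intro member_le_sum) (auto simp: doubly_stochastic_def)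
  then show ?thesis
    using assms by (simp add: doubly_stochastic_def)
qed

lemma doubly_stochastic_total_sum:
  fixes B :: "real^'n^'n"
  assumes "B \<in> doubly_stochastic"
  shows "(\<Sum>i\<in>UNIV. \<Sum>j\<in>UNIV. B $ i $ j) = real CARD('n)"
  using assms by (simp add: doubly_stochastic_def)

lemma square_diff_le_add:
  fixes x y :: real
  assumes "0 \<le> x" "x \<le> 1" "0 \<le> y" "y \<le> 1"
  shows "(x - y)\<^sup>2 \<le> x + y"
proof -
  have "x * x \<le> x" "y * y \<le> y" "0 \<le> x * y"
    using assms by (simp_all add: mult_left_le_one_le)
  moreover have "(x - y)\<^sup>2 = x * x - 2 * (x * y) + y * y"
    by (simp add: power2_eq_square algebra_simps)
  ultimately show ?thesis
    by linarith
qed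

lemma frob_norm_diff_power2_le:
  fixes D B :: "real^'n^'n"
  assumes D: "D \<in> doubly_stochastic" and B: "B \<in> doubly_stochastic"
  shows "(frob_norm (D - B))\<^sup>2 \<le> 2 * real CARD('n)"
proof -
  have entry: "((D - B) $ i $ j)\<^sup>2 \<le> D $ i $ j + B $ i $ j" for i j
    unfolding vector_minus_component
    by (intro square_diff_le_add doubly_stochastic_nonneg doubly_stochastic_le_one D B)
  have "(frob_norm (D - B))\<^sup>2 \<le> (\<Sum>i\<in>UNIV. \<Sum>j\<in>UNIV. D $ i $ j + B $ i $ j)"
    unfolding frob_norm_power2 by (intro sum_mono entry)
  also have "\<dots> = 2 * real CARD('n)"
    using doubly_stochastic_total_sum[OF D] doubly_stochastic_total_sum[OF B]
    by (simp add: sum.distrib)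
  finally show ?thesis .
qed

lemma frob_norm_le_r_S2:
  fixes D B :: "real^'n^'n"
  assumes D: "D \<in> doubly_stochastic" and B: "B \<in> doubly_stochastic"
  shows "frob_norm (D - B) \<le> r_S2 D"
proof -
  have "bdd_above ((\<lambda>B. frob_norm (D - B)) ` doubly_stochastic)"
    using frob_norm_diff_power2_le[OF D] frob_norm_nonneg
    by (intro bdd_aboveI2[where M = "sqrt (2 * real CARD('n))"]) (simp add: real_le_rsqrt)
  then show ?thesis
    unfolding r_S2_def by (rule cSUP_upper[OF B])
qed

lemma r_S2_power2_le:
  fixes D :: "real^'n^'n"
  assumes D: "D \<in> doubly_stochastic"
  shows "(r_S2 D)\<^sup>2 \<le> 2 * real CARD('n)"
proof -
  have "r_S2 D \<le> sqrt (2 * real CARD('n))"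
    unfolding r_S2_def using D frob_norm_diff_power2_le[OF D] frob_norm_nonneg
    by (intro cSUP_least) (auto simp: real_le_rsqrt)
  moreover have "0 \<le> r_S2 D"
    using frob_norm_le_r_S2[OF D D] frob_norm_nonneg by (rule order_trans[rotated])
  ultimately have "(r_S2 D)\<^sup>2 \<le> (sqrt (2 * real CARD('n)))\<^sup>2"
    by (rule power_mono)
  then show ?thesis
    by simp
qed

lemma sum_entries_power2_le:
  fixes A :: "real^'n^'m"
  shows "(\<Sum>i\<in>UNIV. \<Sum>j\<in>UNIV. A $ i $ j)\<^sup>2 \<le> real CARD('m) * real CARD('n) * (frob_norm A)\<^sup>2"
  using sum_squared_le_sum_of_squares[of "\<lambda>p. A $ fst p $ snd p" UNIV]
  by (simp add: frob_norm_power2 sum.cartesian_product split_def UNIV_Times_UNIV[symmetric]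
      card_cartesian_product mult.commute del: UNIV_Times_UNIV)

lemma bij_betw_add_mod:
  fixes n :: nat
  assumes "0 < n"
  shows "bij_betw (\<lambda>m. (a + m) mod n) {..<n} {..<n}"
proof -
  have "inj_on (\<lambda>m. (a + m) mod n) {..<n}"
    by (intro inj_onI) (metis cong_add_lcancel_nat cong_def lessThan_iff mod_less)
  moreover have "(\<lambda>m. (a + m) mod n) ` {..<n} \<subseteq> {..<n}"
    using assms by auto
  ultimately show ?thesis
    by (simp add: bij_betw_def endo_inj_surj)
qed

lemma sum_indicator_add_mod:
  fixes n :: nat
  assumes "k < n"
  shows "(\<Sum>m<n. if (a + m) mod n = k then 1 else 0 :: real) = 1"
proof -
  have "(\<Sum>m<n. if (a + m) mod n = k then 1 else 0 :: real) = (\<Sum>m<n. if m = k then 1 else 0)"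
    using assms sum.reindex_bij_betw[OF bij_betw_add_mod[of n a],
        where g = "\<lambda>m. if m = k then 1 else 0 :: real"]
    by simp
  also have "\<dots> = 1"
    using assms by simp
  finally show ?thesis .
qed

lemma exists_permutation_matrices_sum_ones:
  obtains P :: "nat \<Rightarrow> real^'n^'n"
  where "\<And>k. k < CARD('n) \<Longrightarrow> P k \<in> doubly_stochastic"
    and "\<And>k i j. P k $ i $ j \<in> {0, 1}"
    and "\<And>i j. (\<Sum>k<CARD('n). P k $ i $ j) = 1"
proof -
  define n where "n = CARD('n)"
  have "0 < n"
    unfolding n_def by simp
  obtain g :: "'n \<Rightarrow> nat" where g: "bij_betw g UNIV {..<n}"
    using ex_bij_betw_finite_nat[of "UNIV :: 'n set"] unfolding n_def by (auto simp: atLeast0LessThan)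
  define P :: "nat \<Rightarrow> real^'n^'n"
    where "P k = (\<chi> i j. if (g i + g j) mod n = k then 1 else 0)" for k
  have line_sum: "(\<Sum>j\<in>UNIV. if (a + g j) mod n = k then 1 else 0 :: real) = 1" if "k < n" for a k
    using sum.reindex_bij_betw[OF g, where g = "\<lambda>m. if (a + m) mod n = k then 1 else 0 :: real"]
      sum_indicator_add_mod[OF that]
    by simp
  have "P k \<in> doubly_stochastic" if "k < n" for k
    unfolding doubly_stochastic_def P_def using line_sum[OF that] by (simp add: add.commute)
  moreover have "P k $ i $ j \<in> {0, 1}" for k i j
    by (simp add: P_def)
  moreover have "(\<Sum>k<n. P k $ i $ j) = 1" for i j
    using \<open>0 < n\<close> by (simp add: P_def)
  ultimately show ?thesis
    using that unfolding n_def by blast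
qed

lemma sum_frob_norm_diff_power2:
  fixes D :: "real^'n^'n" and P :: "nat \<Rightarrow> real^'n^'n"
  assumes zero_one: "\<And>k i j. P k $ i $ j \<in> {0, 1}"
    and sum_one: "\<And>i j. (\<Sum>k<m. P k $ i $ j) = 1"
  shows "(\<Sum>k<m. (frob_norm (D - P k))\<^sup>2)
    = real m * (frob_norm D)\<^sup>2 - 2 * (\<Sum>i\<in>UNIV. \<Sum>j\<in>UNIV. D $ i $ j) + real CARD('n) * real CARD('n)"
proof -
  have entry: "(\<Sum>k<m. ((D - P k) $ i $ j)\<^sup>2) = real m * (D $ i $ j)\<^sup>2 - 2 * D $ i $ j + 1" for i j
  proof -
    have "((D - P k) $ i $ j)\<^sup>2 = (D $ i $ j)\<^sup>2 - 2 * D $ i $ j * P k $ i $ j + P k $ i $ j" for k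
      using zero_one[of k i j] by (auto simp: power2_eq_square algebra_simps)
    then have "(\<Sum>k<m. ((D - P k) $ i $ j)\<^sup>2)
        = real m * (D $ i $ j)\<^sup>2 - 2 * D $ i $ j * (\<Sum>k<m. P k $ i $ j) + (\<Sum>k<m. P k $ i $ j)"
      by (simp add: sum.distrib sum_subtractf sum_distrib_left)
    then show ?thesis
      by (simp add: sum_one)
  qed
  have "(\<Sum>k<m. (frob_norm (D - P k))\<^sup>2) = (\<Sum>i\<in>UNIV. \<Sum>j\<in>UNIV. \<Sum>k<m. ((D - P k) $ i $ j)\<^sup>2)"
    unfolding frob_norm_power2 by (subst sum.swap) (simp add: sum.swap[of _ "{..<m}"])
  also have "\<dots> = (\<Sum>i\<in>UNIV. \<Sum>j\<in>UNIV. real m * (D $ i $ j)\<^sup>2 - 2 * D $ i $ j + 1)"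
    by (intro sum.cong refl entry)
  also have "\<dots> = real m * (frob_norm D)\<^sup>2 - 2 * (\<Sum>i\<in>UNIV. \<Sum>j\<in>UNIV. D $ i $ j)
      + real CARD('n) * real CARD('n)"
    by (simp add: frob_norm_power2 sum.distrib sum_subtractf sum_distrib_left)
  finally show ?thesis .
qed

lemma exists_doubly_stochastic_far:
  fixes D :: "real^'n^'n"
  assumes D: "D \<in> doubly_stochastic"
  obtains B where "B \<in> doubly_stochastic" and "real CARD('n) - 1 \<le> (frob_norm (D - B))\<^sup>2"
proof -
  define n where "n = CARD('n)"
  have "0 < n"
    unfolding n_def by simp
  obtain P :: "nat \<Rightarrow> real^'n^'n"
    where P_ds: "\<And>k. k < n \<Longrightarrow> P k \<in> doubly_stochastic"
      and P_zero_one: "\<And>k i j. P k $ i $ j \<in> {0, 1}"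
      and P_sum: "\<And>i j. (\<Sum>k<n. P k $ i $ j) = 1"
    using exists_permutation_matrices_sum_ones[where 'n = 'n] unfolding n_def by blast
  have "real n * real n \<le> real n * real n * (frob_norm D)\<^sup>2"
    using sum_entries_power2_le[of D] doubly_stochastic_total_sum[OF D]
    by (simp add: n_def power2_eq_square)
  then have "1 \<le> (frob_norm D)\<^sup>2"
    using \<open>0 < n\<close> by simp
  moreover have "(\<Sum>k<n. (frob_norm (D - P k))\<^sup>2) = real n * ((frob_norm D)\<^sup>2 - 2 + real n)"
    using sum_frob_norm_diff_power2[OF P_zero_one P_sum, of D] doubly_stochastic_total_sum[OF D]
    by (simp add: n_def algebra_simps)
  ultimately have "real n * (real n - 1) \<le> (\<Sum>k<n. (frob_norm (D - P k))\<^sup>2)"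
    by (simp add: mult_left_mono)
  then obtain k where "k < n" and "real n - 1 \<le> (frob_norm (D - P k))\<^sup>2"
    using sum_bounded_above_strict[of "{..<n}" "\<lambda>k. (frob_norm (D - P k))\<^sup>2" "real n - 1"] \<open>0 < n\<close>
    by (force simp: not_le)
  then show ?thesis
    using that P_ds unfolding n_def by blast
qed

theorem mainTheorem5:
  fixes D :: "real^'n^'n"
  assumes "D \<in> doubly_stochastic"
  shows "real CARD('n) - 1 \<le> (r_S2 D)^2 \<and> (r_S2 D)^2 \<le> 2 * real CARD('n)"
proof
  obtain B where B: "B \<in> doubly_stochastic" and far: "real CARD('n) - 1 \<le> (frob_norm (D - B))\<^sup>2"
    using exists_doubly_stochastic_far[OF assms] .
  have "(frob_norm (D - B))\<^sup>2 \<le> (r_S2 D)\<^sup>2"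
    using frob_norm_le_r_S2[OF assms B] frob_norm_nonneg by (rule power_mono)
  with far show "real CARD('n) - 1 \<le> (r_S2 D)\<^sup>2"
    by linarith
  show "(r_S2 D)\<^sup>2 \<le> 2 * real CARD('n)"
    using assms by (rule r_S2_power2_le)
qed

end
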